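(* Let $(\mathcal{A},\{\mu_n\}_{n\ge1})$ be an $A_\infty$-algebra and $\mathcal{N}:\mathcal{A}\to\mathcal{A}$ a strict homotopy Nijenhuis operator on it. For homogeneous $a_1,\dots,a_n$ and $S\subseteq\{1,\dots,n\}$ write $\mu_n^S(a_1,\dots,a_n)=\mu_n(c_1,\dots,c_n)$ with $c_i=a_i$ for $i\in S$ and $c_i=\mathcal{N}(a_i)$ for $i\notin S$. Define $\eta_n$ by $\eta_n([r];a_1,\dots,a_n)=\mu_n^{\{r\}}(a_1,\dots,a_n)$ for $1\le r\le n$, and, for $n\ge2$, $\eta_n([n+1];a_1,\dots,a_n)=\sum_{k=2}^n(-1)^{k-1}\mathcal{N}^{k-1}\big(\sum_{|S|=k}\mu_n^S(a_1,\dots,a_n)\big)$. Then $(\mathcal{A},\{\eta_n\}_{n\ge1})$ is an $NS_\infty$-algebra. As a consequence, $(\mathcal{A},\{\mu_{n,\mathcal{N}}\}_{n\ge1})$ is an $A_\infty$-algebra, where $\mu_{1,\mathcal{N}}=\mu_1$ and, for $n\ge2$, $\mu_{n,\mathcal{N}}(a_1,\dots,a_n)=\sum_{k=1}^n(-1)^{k-1}\mathcal{N}^{k-1}\big(\sum_{|S|=k}\mu_n^S(a_1,\dots,a_n)\big)$.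
   Context: Over a field of characteristic $0$. An $A_\infty$-algebra: graded vector space $\mathcal{A}$ with degree $n-2$ maps $\mu_n:\mathcal{A}^{\otimes n}\to\mathcal{A}$ such that for all $k\ge1$ and homogeneous $a_1,\dots,a_k$: $\sum_{m+n=k+1}\sum_{i=1}^m(-1)^{i(n+1)+n(|a_1|+\cdots+|a_{i-1}|)}\mu_m(a_1,\dots,a_{i-1},\mu_n(a_i,\dots,a_{i+n-1}),a_{i+n},\dots,a_k)=0$. A strict homotopy Nijenhuis operator is a degree $0$ linear $\mathcal{N}$ with $\mu_n(\mathcal{N}a_1,\dots,\mathcal{N}a_n)=\sum_{k=1}^n(-1)^{k-1}\mathcal{N}^k\big(\sum_{|S|=k}\mu_n^S(a_1,\dots,a_n)\big)$ for all $n\ge1$ and homogeneous $a_i$ (notation $\mu_n^S$ as in the claim). $NS_\infty$-algebras: let $C_n=\{[1],\dots,[n]\}$. $\mathcal{O}(1)=\mathrm{Hom}(\mathbf{k}[C_1]\otimes\mathcal{A},\mathcal{A})$, $\mathcal{O}(n)=\mathrm{Hom}(\mathbf{k}[C_{n+1}]\otimes\mathcal{A}^{\otimes n},\mathcal{A})$ ($n\ge2$); $C_1$, resp. $C_{n+1}$, is the index set of $\mathcal{O}(n)$. For $g\in\mathcal{O}(n)$, $g([*];-)$ is the sum of $g([j];-)$ over its index set and $g([j];-)=0$ for $[j]$ outside it. For $f\in\mathcal{O}(m)$, $g\in\mathcal{O}(n)$ (degrees $m-2$, $n-2$), $1\le i\le m$, homogeneous $a_1,\dots,a_{m+n-1}$,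 with $\varepsilon=(-1)^{n(|a_1|+\cdots+|a_{i-1}|)}$ and $\bar g_*=g([*];a_i,\dots,a_{i+n-1})$, $f\circ_ig\in\mathcal{O}(m+n-1)$ is $\varepsilon$ times: $f([r];a_1,\dots,a_{i-1},\bar g_*,a_{i+n},\dots)$ if $1\le r\le i-1$; $f([i];\dots,g([r-i+1];a_i,\dots,a_{i+n-1}),\dots)$ if $i\le r\le i+n-1$; $f([r-n+1];\dots,\bar g_*,\dots)$ if $i+n\le r\le m+n-1$; $f([i];\dots,g([n+1];a_i,\dots),\dots)+f([m+1];\dots,\bar g_*,\dots)$ if $r=m+n$. An $NS_\infty$-algebra is $(\mathcal{A},\{\eta_n\})$, $\eta_n\in\mathcal{O}(n)$ of degree $n-2$, with $\sum_{m+n=k+1}\sum_{i=1}^m(-1)^{i(n+1)}(\eta_m\circ_i\eta_n)([r];a_1,\dots,a_k)=0$ for all $k\ge1$, all $[r]$ in the index set of $\mathcal{O}(k)$, and homogeneous $a_i$. *)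

theory Defs
  imports Complex_Main
begin

definition graded_vs :: "('k::field_char_0 \<Rightarrow> 'v::ab_group_add \<Rightarrow> 'v) \<Rightarrow> (int \<Rightarrow> 'v set) \<Rightarrow> bool" where
  "graded_vs scale G \<longleftrightarrow>
     vector_space scale \<and>
     (\<forall>d. module.subspace scale (G d)) \<and>
     (\<forall>v. \<exists>!c :: int \<Rightarrow> 'v. finite {d. c d \<noteq> 0} \<and> (\<forall>d. c d \<in> G d) \<and> v = sum c {d. c d \<noteq> 0})"

definition homog :: "(int \<Rightarrow> 'v set) \<Rightarrow> nat \<Rightarrow> int list \<Rightarrow> 'v list \<Rightarrow> bool" where
  "homog G n ds as \<longleftrightarrow> length as = n \<and> length ds = n \<and> (\<forall>j<n. as ! j \<in> G (ds ! j))"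

text \<open>n-ary multilinear maps (an element of Hom(A^{\<otimes>n},A)), represented
  as functions on lists of length n.\<close>
definition multilinear :: "('k::field \<Rightarrow> 'v::ab_group_add \<Rightarrow> 'v) \<Rightarrow> nat \<Rightarrow> ('v list \<Rightarrow> 'v) \<Rightarrow> bool" where
  "multilinear scale n f \<longleftrightarrow>
     (\<forall>as j x y c. length as = n \<and> j < n \<longrightarrow>
        f (as[j := x + y]) = f (as[j := x]) + f (as[j := y]) \<and>
        f (as[j := scale c x]) = scale c (f (as[j := x])))"

definition has_degree :: "(int \<Rightarrow> 'v set) \<Rightarrow> nat \<Rightarrow> int \<Rightarrow> ('v list \<Rightarrow> 'v) \<Rightarrow> bool" where
  "has_degree G n e f \<longleftrightarrow> (\<forall>ds as. homog G n ds as \<longrightarrow> f as \<in> G (sum_list ds + e))"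

definition sgn1 :: "int \<Rightarrow> 'k::field" where
  "sgn1 z = (if even z then 1 else -1)"

text \<open>mu n is the n-ary operation mu_n (only n \<ge> 1 is relevant).\<close>
definition A_infinity :: "('k::field_char_0 \<Rightarrow> 'v::ab_group_add \<Rightarrow> 'v) \<Rightarrow> (int \<Rightarrow> 'v set)
    \<Rightarrow> (nat \<Rightarrow> 'v list \<Rightarrow> 'v) \<Rightarrow> bool" where
  "A_infinity scale G mu \<longleftrightarrow>
     graded_vs scale G \<and>
     (\<forall>n\<ge>1. multilinear scale n (mu n) \<and> has_degree G n (int n - 2) (mu n)) \<and>
     (\<forall>k\<ge>1. \<forall>ds as. homog G k ds as \<longrightarrow>
        (\<Sum>m\<in>{1..k}. let n = k + 1 - m in \<Sum>i\<in>{1..m}.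
           scale (sgn1 (int i * (int n + 1) + int n * sum_list (take (i - 1) ds)))
             (mu m (take (i - 1) as @ [mu n (take n (drop (i - 1) as))] @ drop (i - 1 + n) as))) = 0)"

text \<open>mu_n^S(a_1,...,a_n), with S a subset of {1..n} (1-based positions).\<close>
definition muS :: "(nat \<Rightarrow> 'v list \<Rightarrow> 'v) \<Rightarrow> ('v \<Rightarrow> 'v) \<Rightarrow> nat \<Rightarrow> nat set \<Rightarrow> 'v list \<Rightarrow> 'v" where
  "muS mu N n S as = mu n (map (\<lambda>j. if j \<in> S then as ! (j - 1) else N (as ! (j - 1))) [1..<n+1])"

definition strict_homotopy_Nijenhuis :: "('k::field_char_0 \<Rightarrow> 'v::ab_group_add \<Rightarrow> 'v) \<Rightarrow> (int \<Rightarrow> 'v set)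
    \<Rightarrow> (nat \<Rightarrow> 'v list \<Rightarrow> 'v) \<Rightarrow> ('v \<Rightarrow> 'v) \<Rightarrow> bool" where
  "strict_homotopy_Nijenhuis scale G mu N \<longleftrightarrow>
     Vector_Spaces.linear scale scale N \<and>
     (\<forall>d. N ` G d \<subseteq> G d) \<and>
     (\<forall>n\<ge>1. \<forall>ds as. homog G n ds as \<longrightarrow>
        mu n (map N as) =
        (\<Sum>k\<in>{1..n}. scale ((-1) ^ (k - 1))
           ((N ^^ k) (\<Sum>S\<in>{S. S \<subseteq> {1..n} \<and> card S = k}. muS mu N n S as))))"

text \<open>Index set of O(n): C_1 = {[1]} for n = 1, C_{n+1} = {[1],...,[n+1]} for n \<ge> 2.\<close>
definition idx :: "nat \<Rightarrow> nat set" where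
  "idx n = (if n = 1 then {1} else {1..n+1})"

text \<open>An element g of O(n) is represented as a function g :: nat \<Rightarrow> 'v list \<Rightarrow> 'v,
  g r as = g([r]; as).  Evaluation uses the convention that g([j];-) = 0 for
  [j] outside the index set.\<close>
definition ev :: "nat \<Rightarrow> (nat \<Rightarrow> 'v list \<Rightarrow> 'v::zero) \<Rightarrow> nat \<Rightarrow> 'v list \<Rightarrow> 'v" where
  "ev n g r as = (if r \<in> idx n then g r as else 0)"

definition ev_star :: "nat \<Rightarrow> (nat \<Rightarrow> 'v list \<Rightarrow> 'v::comm_monoid_add) \<Rightarrow> 'v list \<Rightarrow> 'v" where
  "ev_star n g as = (\<Sum>j\<in>idx n. g j as)"

text \<open>Partial composition f \<circ>_i g for f in O(m), g in O(n), evaluated at [r] on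
  homogeneous as of degrees ds (length m+n-1).\<close>
definition pcomp :: "('k::field \<Rightarrow> 'v::ab_group_add \<Rightarrow> 'v) \<Rightarrow> nat \<Rightarrow> (nat \<Rightarrow> 'v list \<Rightarrow> 'v)
    \<Rightarrow> nat \<Rightarrow> (nat \<Rightarrow> 'v list \<Rightarrow> 'v) \<Rightarrow> nat \<Rightarrow> nat \<Rightarrow> int list \<Rightarrow> 'v list \<Rightarrow> 'v" where
  "pcomp scale m f n g i r ds as =
    (let pre = take (i - 1) as; mid = take n (drop (i - 1) as); post = drop (i - 1 + n) as;
         gs = ev_star n g mid;
         eps = sgn1 (int n * sum_list (take (i - 1) ds))
     in scale eps
       (if 1 \<le> r \<and> r \<le> i - 1 then ev m f r (pre @ [gs] @ post)
        else if i \<le> r \<and> r \<le> i + n - 1 then ev m f i (pre @ [ev n g (r - i + 1) mid] @ post)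
        else if i + n \<le> r \<and> r \<le> m + n - 1 then ev m f (r - n + 1) (pre @ [gs] @ post)
        else if r = m + n then ev m f i (pre @ [ev n g (n + 1) mid] @ post)
                              + ev m f (m + 1) (pre @ [gs] @ post)
        else 0))"

definition NS_infinity :: "('k::field_char_0 \<Rightarrow> 'v::ab_group_add \<Rightarrow> 'v) \<Rightarrow> (int \<Rightarrow> 'v set)
    \<Rightarrow> (nat \<Rightarrow> nat \<Rightarrow> 'v list \<Rightarrow> 'v) \<Rightarrow> bool" where
  "NS_infinity scale G eta \<longleftrightarrow>
     graded_vs scale G \<and>
     (\<forall>n\<ge>1. \<forall>r\<in>idx n. multilinear scale n (eta n r) \<and> has_degree G n (int n - 2) (eta n r)) \<and>
     (\<forall>k\<ge>1. \<forall>r\<in>idx k. \<forall>ds as. homog G k ds as \<longrightarrow>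
        (\<Sum>m\<in>{1..k}. let n = k + 1 - m in \<Sum>i\<in>{1..m}.
           scale (sgn1 (int i * (int n + 1))) (pcomp scale m (eta m) n (eta n) i r ds as)) = 0)"

definition eta_N :: "('k::field \<Rightarrow> 'v::ab_group_add \<Rightarrow> 'v) \<Rightarrow> (nat \<Rightarrow> 'v list \<Rightarrow> 'v) \<Rightarrow> ('v \<Rightarrow> 'v)
    \<Rightarrow> nat \<Rightarrow> nat \<Rightarrow> 'v list \<Rightarrow> 'v" where
  "eta_N scale mu N n r as =
    (if 1 \<le> r \<and> r \<le> n then muS mu N n {r} as
     else if 2 \<le> n \<and> r = n + 1 then
       (\<Sum>k\<in>{2..n}. scale ((-1) ^ (k - 1))
          ((N ^^ (k - 1)) (\<Sum>S\<in>{S. S \<subseteq> {1..n} \<and> card S = k}. muS mu N n S as)))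
     else 0)"

definition mu_N :: "('k::field \<Rightarrow> 'v::ab_group_add \<Rightarrow> 'v) \<Rightarrow> (nat \<Rightarrow> 'v list \<Rightarrow> 'v) \<Rightarrow> ('v \<Rightarrow> 'v)
    \<Rightarrow> nat \<Rightarrow> 'v list \<Rightarrow> 'v" where
  "mu_N scale mu N n as =
    (if n = 1 then mu 1 as
     else (\<Sum>k\<in>{1..n}. scale ((-1) ^ (k - 1))
          ((N ^^ (k - 1)) (\<Sum>S\<in>{S. S \<subseteq> {1..n} \<and> card S = k}. muS mu N n S as))))"

end

theory Submission
  imports Defs
begin

(* Encode a subset S of {1..n} by a boolean mask and let negN = -N, so that
   (-1)^j N^j = negN^j.  Then mu_{n,N} is the sum over nonzero masks bs of
   negN^(|bs|-1) applied to mu^bs, and the Nijenhuis identity says that the sum over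
   all masks of negN^|bs| mu^bs vanishes.  Splitting that identity at one argument
   shows that the alternating sum over masks of the remaining arguments commutes
   with N; hence a composite mu_{m,N} o_i mu_{n,N} expands into the mask sum of the
   composites mu_m o_i mu_n, and the Stasheff relations of mu applied to masked
   inputs add up to those of mu_{n,N}.  For eta, the component [r] (r <= k) of every
   partial composition is mu_m o_i mu_n on the input in which only the r-th argument
   escapes N, so that relation is again a Stasheff relation of mu; summing over all
   labels gives the Stasheff relation of mu_{n,N}, which settles the label [k+1]. *)

section \<open>Boolean masks\<close>

definition masks :: "nat \<Rightarrow> bool list set" where
  "masks n = {bs. length bs = n}"

lemma finite_masks [simp]: "finite (masks n)"
proof -
  have "masks n = {bs. set bs \<subseteq> UNIV \<and> length bs = n}" by (simp add: masks_def)
  then show ?thesis using finite_lists_length_eq[of "UNIV :: bool set" n] by simp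
qed

lemma masks_0: "masks 0 = {[]}"
  by (auto simp: masks_def)

lemma sum_masks_append:
  "(\<Sum>bs\<in>masks (p + q). f bs) = (\<Sum>b1\<in>masks p. \<Sum>b2\<in>masks q. f (b1 @ b2))"
proof -
  have "(\<Sum>bs\<in>masks (p + q). f bs) = (\<Sum>(b1, b2)\<in>masks p \<times> masks q. f (b1 @ b2))"
    by (rule sum.reindex_bij_witness[where i="\<lambda>(b1, b2). b1 @ b2" and j="\<lambda>bs. (take p bs, drop p bs)"])
       (auto simp: masks_def)
  then show ?thesis by (simp add: sum.cartesian_product)
qed

lemma sum_masks_Cons:
  "(\<Sum>bs\<in>masks (Suc n). f bs) = (\<Sum>bs\<in>masks n. f (True # bs) + f (False # bs))"
proof -
  have "(\<Sum>bs\<in>masks (Suc n). f bs) = (\<Sum>(b, bs)\<in>UNIV \<times> masks n. f (b # bs))"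
    by (rule sum.reindex_bij_witness[where i="\<lambda>(b, bs). b # bs" and j="\<lambda>bs. (hd bs, tl bs)"])
       (auto simp: masks_def length_Suc_conv)
  also have "\<dots> = (\<Sum>bs\<in>masks n. \<Sum>b\<in>UNIV. f (b # bs))"
    by (subst sum.swap) (simp add: sum.cartesian_product)
  finally show ?thesis by (simp add: UNIV_bool add.commute)
qed

lemma sum_masks_middle:
  "(\<Sum>bs\<in>masks (p + Suc q). f bs) =
   (\<Sum>b1\<in>masks p. \<Sum>b2\<in>masks q. f (b1 @ True # b2) + f (b1 @ False # b2))"
  by (simp only: sum_masks_append sum_masks_Cons)

lemma sum_masks_remove_zero:
  "(\<Sum>bs\<in>masks n. f bs) = f (replicate n False) + (\<Sum>bs\<in>masks n. if True \<in> set bs then f bs else 0)"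
proof -
  have "(True \<in> set bs) \<longleftrightarrow> bs \<noteq> replicate n False" if "bs \<in> masks n" for bs
    using that by (auto simp: masks_def replicate_length_same[symmetric] in_set_conv_nth list_eq_iff_nth_eq)
  then have "(\<Sum>bs\<in>masks n. if True \<in> set bs then f bs else 0) = (\<Sum>bs\<in>masks n - {replicate n False}. f bs)"
    by (simp add: sum.If_cases Int_def set_diff_eq)
  moreover have "replicate n False \<in> masks n" by (simp add: masks_def)
  ultimately show ?thesis by (simp add: sum.remove)
qed

definition mask_of :: "nat \<Rightarrow> nat set \<Rightarrow> bool list" where
  "mask_of n S = map (\<lambda>j. j \<in> S) [1..<n+1]"

definition positions :: "bool list \<Rightarrow> nat set" where
  "positions bs = Suc ` {j. j < length bs \<and> bs ! j}"

lemma length_mask_of [simp]: "length (mask_of n S) = n"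
  by (simp add: mask_of_def)

lemma nth_mask_of: "j < n \<Longrightarrow> mask_of n S ! j = (Suc j \<in> S)"
  by (simp add: mask_of_def nth_upt del: upt_Suc)

lemma mask_of_singleton_add: "mask_of (a + b) {r} = mask_of a {r} @ mask_of b {r - a}"
  by (rule nth_equalityI) (auto simp: nth_mask_of nth_append)

lemma mask_of_singleton_outside: "r = 0 \<or> n < r \<Longrightarrow> mask_of n {r} = replicate n False"
  by (rule nth_equalityI) (auto simp: nth_mask_of)

lemma mask_of_singleton_Suc: "mask_of (Suc n) {r} = (r = 1) # mask_of n {r - 1}"
  by (rule nth_equalityI) (auto simp: nth_mask_of nth_Cons split: nat.split)

lemma mask_of_positions: "mask_of (length bs) (positions bs) = bs"
  by (rule nth_equalityI) (auto simp: nth_mask_of positions_def)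

lemma positions_mask_of:
  assumes "S \<subseteq> {1..n}"
  shows "positions (mask_of n S) = S"
proof (intro set_eqI iffI)
  fix x assume "x \<in> S"
  with assms have "x \<in> {1..n}" by blast
  then have "x = Suc (x - 1)" "x - 1 < n" by auto
  with \<open>x \<in> S\<close> show "x \<in> positions (mask_of n S)"
    unfolding positions_def by (metis (mono_tags) image_eqI length_mask_of mem_Collect_eq nth_mask_of)
qed (auto simp: positions_def nth_mask_of)

lemma card_positions: "card (positions bs) = count_list bs True"
  by (simp add: positions_def card_image count_list_eq_length_filter length_filter_conv_card)

lemma sum_nonempty_subsets_eq_sum_masks:
  "(\<Sum>S\<in>{S. S \<subseteq> {1..n} \<and> S \<noteq> {}}. F S) = (\<Sum>bs\<in>masks n. if True \<in> set bs then F (positions bs) else 0)"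
proof -
  have "(\<Sum>S\<in>{S. S \<subseteq> {1..n} \<and> S \<noteq> {}}. F S) = (\<Sum>bs\<in>{bs\<in>masks n. True \<in> set bs}. F (positions bs))"
  proof (rule sum.reindex_bij_witness[where i=positions and j="mask_of n"])
    fix bs assume bs: "bs \<in> {bs\<in>masks n. True \<in> set bs}"
    then have len: "length bs = n" by (simp add: masks_def)
    then show "mask_of n (positions bs) = bs" using mask_of_positions by blast
    from bs obtain i where "i < n" "bs ! i" by (auto simp: masks_def in_set_conv_nth)
    then have "Suc i \<in> positions bs" using len by (simp add: positions_def)
    then show "positions bs \<in> {S. S \<subseteq> {1..n} \<and> S \<noteq> {}}" using len by (auto simp: positions_def)
  next
    fix S assume S: "S \<in> {S. S \<subseteq> {1..n} \<and> S \<noteq> {}}"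
    then show "positions (mask_of n S) = S" using positions_mask_of by blast
    then have "positions (mask_of n S) \<noteq> {}" using S by simp
    then have "True \<in> set (mask_of n S)" by (auto simp: positions_def) (metis length_mask_of nth_mem)
    then show "mask_of n S \<in> {bs\<in>masks n. True \<in> set bs}" by (simp add: masks_def)
  qed (simp add: positions_mask_of)
  then show ?thesis by (simp add: sum.inter_filter)
qed

lemma sum_subsets_by_card:
  "(\<Sum>k\<in>{1..n}. \<Sum>S\<in>{S. S \<subseteq> {1..n} \<and> card S = k}. F k S) =
   (\<Sum>S\<in>{S. S \<subseteq> {1..n} \<and> S \<noteq> {}}. F (card S) S)"
proof -
  have "finite {S. S \<subseteq> {1..n} \<and> S \<noteq> {}}" by (rule finite_subset[of _ "Pow {1..n}"]) auto
  moreover have "card S \<in> {1..n}" if "S \<subseteq> {1..n}" "S \<noteq> {}" for S :: "nat set"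
    using that card_mono[OF _ that(1)] finite_subset[OF that(1)] by (simp add: Suc_le_eq card_gt_0_iff)
  then have "card ` {S. S \<subseteq> {1..n} \<and> S \<noteq> {}} \<subseteq> {1..n}" by blast
  ultimately have "(\<Sum>S\<in>{S. S \<subseteq> {1..n} \<and> S \<noteq> {}}. F (card S) S) =
      (\<Sum>k\<in>{1..n}. \<Sum>S\<in>{S \<in> {S. S \<subseteq> {1..n} \<and> S \<noteq> {}}. card S = k}. F (card S) S)"
    by (intro sum.group[symmetric]) simp_all
  also have "\<dots> = (\<Sum>k\<in>{1..n}. \<Sum>S\<in>{S. S \<subseteq> {1..n} \<and> card S = k}. F k S)"
    by (intro sum.cong refl) auto
  finally show ?thesis ..
qed

lemma multilinear_slot_add:
  assumes "multilinear scale n f" and "length pre + 1 + length post = n"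
  shows "f (pre @ (x + y) # post) = f (pre @ x # post) + f (pre @ y # post)"
proof -
  have "length (pre @ x # post) = n" "length pre < n" using assms(2) by auto
  then show ?thesis using assms(1) unfolding multilinear_def by (metis list_update_length)
qed

context vector_space
begin

lemma multilinear_sum:
  "finite A \<Longrightarrow> (\<And>a. a \<in> A \<Longrightarrow> multilinear scale n (f a)) \<Longrightarrow> multilinear scale n (\<lambda>w. \<Sum>a\<in>A. f a w)"
  by (induct A rule: finite_induct) (simp_all add: multilinear_def scale_right_distrib sum.distrib)

lemma multilinear_compose_linear:
  "Vector_Spaces.linear scale scale L \<Longrightarrow> multilinear scale n f \<Longrightarrow> multilinear scale n (\<lambda>w. L (f w))"
  by (simp add: multilinear_def Vector_Spaces.linear_iff)

lemma has_degree_sum: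
  assumes "\<And>d. subspace (G d)" and "\<And>a. a \<in> A \<Longrightarrow> has_degree G n e (f a)"
  shows "has_degree G n e (\<lambda>w. \<Sum>a\<in>A. f a w)"
  unfolding has_degree_def
proof (intro allI impI)
  fix ds as assume "homog G n ds as"
  then show "(\<Sum>a\<in>A. f a as) \<in> G (sum_list ds + e)"
    using assms by (intro subspace_sum) (auto simp: has_degree_def)
qed

lemma has_degree_compose:
  "(\<And>x d. x \<in> G d \<Longrightarrow> L x \<in> G d) \<Longrightarrow> has_degree G n e f \<Longrightarrow> has_degree G n e (\<lambda>w. L (f w))"
  by (simp add: has_degree_def)

lemma multilinear_muS:
  assumes "multilinear scale n (mu n)" and "Vector_Spaces.linear scale scale N"
  shows "multilinear scale n (muS mu N n S)"
  unfolding multilinear_def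
proof (intro allI impI)
  fix as :: "'b list" and j x y and c :: 'a
  assume as: "length as = n \<and> j < n"
  define ws where "ws = map (\<lambda>i. if i \<in> S then as ! (i - 1) else N (as ! (i - 1))) [1..<n+1]"
  define L where "L v = (if Suc j \<in> S then v else N v)" for v
  have upd: "muS mu N n S (as[j := v]) = mu n (ws[j := L v])" for v
    unfolding muS_def ws_def L_def
    by (rule arg_cong[where f="mu n"], rule nth_equalityI)
       (use as in \<open>auto simp: nth_list_update nth_upt simp del: upt_Suc\<close>)
  have "L (x + y) = L x + L y" "L (scale c x) = scale c (L x)"
    using assms(2) by (auto simp: L_def Vector_Spaces.linear_iff)
  then show "muS mu N n S (as[j := x + y]) = muS mu N n S (as[j := x]) + muS mu N n S (as[j := y]) \<and>
        muS mu N n S (as[j := scale c x]) = scale c (muS mu N n S (as[j := x]))"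
    using assms(1) as unfolding upd multilinear_def by (simp add: ws_def)
qed

end

lemma has_degree_muS:
  assumes "has_degree G n e (mu n)" and "\<And>x d. x \<in> G d \<Longrightarrow> N x \<in> G d"
  shows "has_degree G n e (muS mu N n S)"
  unfolding has_degree_def
proof (intro allI impI)
  fix ds as assume "homog G n ds as"
  then have "homog G n ds (map (\<lambda>i. if i \<in> S then as ! (i - 1) else N (as ! (i - 1))) [1..<n+1])"
    using assms(2) by (auto simp: homog_def nth_upt simp del: upt_Suc)
  then show "muS mu N n S as \<in> G (sum_list ds + e)"
    using assms(1) by (simp add: has_degree_def muS_def)
qed

definition plug :: "nat \<Rightarrow> nat \<Rightarrow> ('a list \<Rightarrow> 'a) \<Rightarrow> 'a list \<Rightarrow> 'a list" where
  "plug i n g as = take (i - 1) as @ [g (take n (drop (i - 1) as))] @ drop (i - 1 + n) as"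

lemma plug_append: "length pre = i - 1 \<Longrightarrow> length mid = n \<Longrightarrow> plug i n g (pre @ mid @ post) = pre @ g mid # post"
  by (simp add: plug_def)

lemma obtain_plug_split:
  assumes "1 \<le> i" "i \<le> m" "m \<le> k" "length as = k"
  obtains pre mid post where "as = pre @ mid @ post"
    "length pre = i - 1" "length mid = k + 1 - m" "length post = m - i"
proof
  show "as = take (i - 1) as @ take (k + 1 - m) (drop (i - 1) as) @ drop (i - 1 + (k + 1 - m)) as"
    by (metis append_take_drop_id drop_drop add.commute)
qed (use assms in auto)

definition stasheff_sum :: "('k::field \<Rightarrow> 'v::ab_group_add \<Rightarrow> 'v) \<Rightarrow> (nat \<Rightarrow> 'v list \<Rightarrow> 'v) \<Rightarrow> nat \<Rightarrow> int list \<Rightarrow> 'v list \<Rightarrow> 'v" where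
  "stasheff_sum scale f k ds as = (\<Sum>m\<in>{1..k}. \<Sum>i\<in>{1..m}.
     scale (sgn1 (int i * (int (k + 1 - m) + 1) + int (k + 1 - m) * sum_list (take (i - 1) ds)))
       (f m (plug i (k + 1 - m) (f (k + 1 - m)) as)))"

lemma A_infinity_iff:
  "A_infinity scale G f \<longleftrightarrow> graded_vs scale G \<and>
     (\<forall>n\<ge>1. multilinear scale n (f n) \<and> has_degree G n (int n - 2) (f n)) \<and>
     (\<forall>k\<ge>1. \<forall>ds as. homog G k ds as \<longrightarrow> stasheff_sum scale f k ds as = 0)"
  by (simp add: A_infinity_def stasheff_sum_def plug_def Let_def)

lemma stasheff_sum_cong:
  assumes "length as = k" and "\<And>m w. 1 \<le> m \<Longrightarrow> m \<le> k \<Longrightarrow> length w = m \<Longrightarrow> f m w = g m w"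
  shows "stasheff_sum scale f k ds as = stasheff_sum scale g k ds as"
  unfolding stasheff_sum_def using assms by (intro sum.cong refl arg_cong[where f="scale _"]) (auto simp: plug_def)

definition ns_sum :: "('k::field \<Rightarrow> 'v::ab_group_add \<Rightarrow> 'v) \<Rightarrow> (nat \<Rightarrow> nat \<Rightarrow> 'v list \<Rightarrow> 'v) \<Rightarrow> nat \<Rightarrow> nat \<Rightarrow> int list \<Rightarrow> 'v list \<Rightarrow> 'v" where
  "ns_sum scale eta k r ds as = (\<Sum>m\<in>{1..k}. \<Sum>i\<in>{1..m}.
     scale (sgn1 (int i * (int (k + 1 - m) + 1))) (pcomp scale m (eta m) (k + 1 - m) (eta (k + 1 - m)) i r ds as))"

lemma NS_infinity_iff:
  "NS_infinity scale G eta \<longleftrightarrow> graded_vs scale G \<and>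
     (\<forall>n\<ge>1. \<forall>r\<in>idx n. multilinear scale n (eta n r) \<and> has_degree G n (int n - 2) (eta n r)) \<and>
     (\<forall>k\<ge>1. \<forall>r\<in>idx k. \<forall>ds as. homog G k ds as \<longrightarrow> ns_sum scale eta k r ds as = 0)"
  by (simp add: NS_infinity_def ns_sum_def Let_def)

lemma sgn1_add: "sgn1 (a + b) = sgn1 a * sgn1 b"
  by (simp add: sgn1_def)

lemma ev_star_eq_sum_ev: "ev_star n g w = (\<Sum>j<n + 1. ev n g (Suc j) w)"
proof -
  have "(\<Sum>j<n + 1. ev n g (Suc j) w) = (\<Sum>j\<in>{1..n + 1}. ev n g j w)"
    by (simp only: sum.atLeast1_atMost_eq One_nat_def)
  also have "\<dots> = (\<Sum>j\<in>idx n. g j w)"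
    by (simp add: ev_def sum.If_cases idx_def Int_absorb1)
  finally show ?thesis by (simp add: ev_star_def)
qed

lemma pcomp_append:
  assumes "length pre = i - 1" and "length mid = n"
  shows "pcomp scale m f n g i r ds (pre @ mid @ post) = scale (sgn1 (int n * sum_list (take (i - 1) ds)))
    (if 1 \<le> r \<and> r \<le> i - 1 then ev m f r (pre @ ev_star n g mid # post)
     else if i \<le> r \<and> r \<le> i + n - 1 then ev m f i (pre @ ev n g (r - i + 1) mid # post)
     else if i + n \<le> r \<and> r \<le> m + n - 1 then ev m f (r - n + 1) (pre @ ev_star n g mid # post)
     else if r = m + n then ev m f i (pre @ ev n g (n + 1) mid # post) + ev m f (m + 1) (pre @ ev_star n g mid # post)
     else 0)"
proof -
  have split: "take (i - 1) (pre @ mid @ post) = pre" "take n (drop (i - 1) (pre @ mid @ post)) = mid"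
    "drop (i - 1 + n) (pre @ mid @ post) = post"
    using assms by simp_all
  show ?thesis unfolding pcomp_def Let_def split by (simp only: append_Cons append_Nil)
qed

lemma sum_lessThan_add: "(\<Sum>r<a + b. h r) = (\<Sum>r<a. h r) + (\<Sum>r<b. h (a + r))" for a b :: nat
  by (induct b) (simp_all add: add.assoc)

(* Summed over all labels r the pieces of f o_i g reassemble: the label [m+n] supplies
   the missing component [n+1] of g in slot i and the component [m+1] of f. *)
lemma (in vector_space) sum_pcomp:
  assumes lens: "length pre = i - 1" "length mid = n" "length post = m - i"
    and i: "1 \<le> i" "i \<le> m" and n: "1 \<le> n"
    and additive: "\<And>x y. f i (pre @ (x + y) # post) = f i (pre @ x # post) + f i (pre @ y # post)"
  shows "(\<Sum>r\<in>{1..m + n}. pcomp scale m f n g i r ds (pre @ mid @ post)) =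
    scale (sgn1 (int n * sum_list (take (i - 1) ds))) (ev_star m f (pre @ ev_star n g mid # post))"
proof -
  define p q where "p = i - 1" and "q = m - i"
  have m: "m = p + 1 + q" and i_eq: "i = Suc p" using i by (simp_all add: p_def q_def)
  define eps :: 'a where "eps = sgn1 (int n * sum_list (take (i - 1) ds))"
  define X where "X = ev_star n g mid"
  define F where "F j x = ev m f j (pre @ x # post)" for j x
  define pc where "pc r = pcomp scale m f n g i r ds (pre @ mid @ post)" for r
  have pc: "pc r = scale eps
    (if 1 \<le> r \<and> r \<le> i - 1 then F r X
     else if i \<le> r \<and> r \<le> i + n - 1 then F i (ev n g (r - i + 1) mid)
     else if i + n \<le> r \<and> r \<le> m + n - 1 then F (r - n + 1) X
     else if r = m + n then F i (ev n g (n + 1) mid) + F (m + 1) X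
     else 0)" for r
    unfolding pc_def eps_def F_def X_def by (rule pcomp_append[OF lens(1,2)])
  have F_i_sum: "F i (sum h A) = (\<Sum>a\<in>A. F i (h a))" for h :: "nat \<Rightarrow> 'b" and A
  proof -
    have "F i x = f i (pre @ x # post)" for x using i by (simp add: F_def ev_def idx_def)
    moreover have "f i (pre @ 0 # post) = 0" using additive[of 0 0] by simp
    ultimately show ?thesis using sum_comp_morphism[of "F i" h A] additive by simp
  qed
  have "(\<Sum>r\<in>{1..m + n}. pc r) = (\<Sum>r<p + (n + (q + 1)). pc (Suc r))"
    by (simp add: sum.atLeast1_atMost_eq m ac_simps)
  also have "\<dots> = (\<Sum>r<p. pc (Suc r)) + (\<Sum>t<n. pc (Suc (p + t))) + (\<Sum>s<q. pc (Suc (p + n + s))) + pc (m + n)"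
    by (simp only: sum_lessThan_add Suc_eq_plus1[symmetric] sum.lessThan_Suc) (simp add: m ac_simps)
  also have "\<dots> = scale eps ((\<Sum>r<p. F (Suc r) X) + (\<Sum>t<n. F i (ev n g (Suc t) mid))
      + (\<Sum>s<q. F (p + 2 + s) X) + (F i (ev n g (n + 1) mid) + F (m + 1) X))"
    using n by (simp add: pc m i_eq scale_sum_right scale_right_distrib ac_simps)
  finally have "(\<Sum>r\<in>{1..m + n}. pc r) = scale eps ((\<Sum>r<p. F (Suc r) X) + (\<Sum>t<n. F i (ev n g (Suc t) mid))
      + (\<Sum>s<q. F (p + 2 + s) X) + (F i (ev n g (n + 1) mid) + F (m + 1) X))" .
  moreover have "(\<Sum>t<n. F i (ev n g (Suc t) mid)) + F i (ev n g (n + 1) mid) = F i X"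
    unfolding X_def ev_star_eq_sum_ev F_i_sum by simp
  moreover have "ev_star m f (pre @ X # post) = (\<Sum>r<p. F (Suc r) X) + F i X + (\<Sum>s<q. F (p + 2 + s) X) + F (m + 1) X"
  proof -
    have "m + 1 = p + (Suc 0 + Suc q)" by (simp add: m)
    then show ?thesis unfolding ev_star_eq_sum_ev F_def
      by (simp only: sum_lessThan_add sum.lessThan_Suc) (simp add: m i_eq ac_simps)
  qed
  ultimately show ?thesis unfolding pc_def eps_def X_def by (simp add: ac_simps)
qed

section \<open>Deformation by a strict homotopy Nijenhuis operator\<close>

locale graded_nijenhuis = vector_space scale + N: Vector_Spaces.linear scale scale N
  for scale :: "'k::field_char_0 \<Rightarrow> 'v::ab_group_add \<Rightarrow> 'v" and N :: "'v \<Rightarrow> 'v" +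
  fixes G :: "int \<Rightarrow> 'v set" and mu :: "nat \<Rightarrow> 'v list \<Rightarrow> 'v"
  assumes graded: "graded_vs scale G"
    and N_graded: "x \<in> G d \<Longrightarrow> N x \<in> G d"
    and mu_multilinear: "n \<ge> 1 \<Longrightarrow> multilinear scale n (mu n)"
    and mu_degree: "n \<ge> 1 \<Longrightarrow> has_degree G n (int n - 2) (mu n)"
    and nijenhuis: "n \<ge> 1 \<Longrightarrow> homog G n ds as \<Longrightarrow> mu n (map N as) =
        (\<Sum>k\<in>{1..n}. scale ((-1) ^ (k - 1))
           ((N ^^ k) (\<Sum>S\<in>{S. S \<subseteq> {1..n} \<and> card S = k}. muS mu N n S as)))"
begin

definition homogeneous :: "'v set" where
  "homogeneous = (\<Union>d. G d)"

lemma subspace_G: "subspace (G d)"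
  using graded by (simp add: graded_vs_def)

lemma homog_homogeneous: "homog G n ds w \<Longrightarrow> set w \<subseteq> homogeneous"
  by (fastforce simp: homog_def homogeneous_def in_set_conv_nth)

lemma obtain_homog:
  assumes "set w \<subseteq> homogeneous"
  obtains ds where "homog G (length w) ds w"
proof
  have "x \<in> G (SOME d. x \<in> G d)" if "x \<in> set w" for x
    using that assms unfolding homogeneous_def by (metis (mono_tags) UN_E someI subsetD)
  then show "homog G (length w) (map (\<lambda>x. SOME d. x \<in> G d) w) w"
    by (simp add: homog_def)
qed

lemma N_homogeneous: "x \<in> homogeneous \<Longrightarrow> N x \<in> homogeneous"
  using N_graded unfolding homogeneous_def by blast

lemma mu_homogeneous:
  assumes "n \<ge> 1" and "length w = n" and "set w \<subseteq> homogeneous"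
  shows "mu n w \<in> homogeneous"
proof -
  obtain ds where "homog G n ds w" using obtain_homog assms(2,3) by metis
  then have "mu n w \<in> G (sum_list ds + (int n - 2))"
    using mu_degree[OF assms(1)] by (simp add: has_degree_def)
  then show ?thesis by (auto simp: homogeneous_def)
qed

definition negN :: "'v \<Rightarrow> 'v" where
  "negN x = - N x"

lemma negN_pow_add: "(negN ^^ j) (x + y) = (negN ^^ j) x + (negN ^^ j) y"
  by (induct j) (simp_all add: negN_def N.add)

lemma negN_pow_zero [simp]: "(negN ^^ j) 0 = 0"
  using negN_pow_add[of j 0 0] by simp

lemma negN_pow_sum: "(negN ^^ j) (sum f A) = (\<Sum>a\<in>A. (negN ^^ j) (f a))"
  using sum_comp_morphism[of "negN ^^ j" f A] negN_pow_add by simp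

lemma negN_pow_scale: "(negN ^^ j) (scale c x) = scale c ((negN ^^ j) x)"
  by (induct j) (simp_all add: negN_def N.scale)

lemma negN_pow_Suc: "(negN ^^ Suc j) x = - N ((negN ^^ j) x)"
  by (simp add: negN_def)

lemma negN_pow_negN_pow: "(negN ^^ a) ((negN ^^ b) x) = (negN ^^ (a + b)) x"
  by (simp add: funpow_add)

lemma negN_pow_eq: "(negN ^^ j) x = scale ((-1) ^ j) ((N ^^ j) x)"
  by (induct j) (simp_all add: negN_def N.scale N.neg)

lemma scale_N_pow_eq_negN_pow: "k \<ge> 1 \<Longrightarrow> scale ((-1) ^ (k - 1)) ((N ^^ k) x) = - (negN ^^ k) x"
  by (cases k) (simp_all add: negN_pow_eq negN_def N.scale N.neg)

lemma linear_negN_pow: "Vector_Spaces.linear scale scale (negN ^^ j)"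
proof (induct j)
  case (Suc j)
  have "Vector_Spaces.linear scale scale negN"
    using N.linear_axioms unfolding negN_def Vector_Spaces.linear_iff by (simp add: N.neg)
  then show ?case using Vector_Spaces.linear_compose[OF Suc] by (simp add: comp_def)
qed (simp add: Vector_Spaces.linear_iff vector_space_axioms)

lemma negN_pow_graded: "x \<in> G d \<Longrightarrow> (negN ^^ j) x \<in> G d"
  by (induct j) (simp_all add: negN_def N_graded subspace_neg[OF subspace_G])

lemma negN_pow_homogeneous: "x \<in> homogeneous \<Longrightarrow> (negN ^^ j) x \<in> homogeneous"
  using negN_pow_graded by (auto simp: homogeneous_def)

definition masked :: "bool list \<Rightarrow> 'v list \<Rightarrow> 'v list" where
  "masked bs w = map (\<lambda>(b, x). if b then x else N x) (zip bs w)"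

lemma masked_simps [simp]:
  "masked [] w = []" "masked bs [] = []"
  "masked (b # bs) (x # w) = (if b then x else N x) # masked bs w"
  "length (masked bs w) = min (length bs) (length w)"
  by (auto simp: masked_def)

lemma masked_append [simp]: "length b1 = length w1 \<Longrightarrow> masked (b1 @ b2) (w1 @ w2) = masked b1 w1 @ masked b2 w2"
  by (simp add: masked_def)

lemma nth_masked: "j < length bs \<Longrightarrow> j < length w \<Longrightarrow> masked bs w ! j = (if bs ! j then w ! j else N (w ! j))"
  by (simp add: masked_def)

lemma masked_replicate_False: "length w = n \<Longrightarrow> masked (replicate n False) w = map N w"
  by (induct w arbitrary: n) auto

lemma masked_homogeneous: "set w \<subseteq> homogeneous \<Longrightarrow> set (masked bs w) \<subseteq> homogeneous"
  by (induct bs w rule: list_induct2') (auto simp: N_homogeneous)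

lemma homog_masked: "homog G n ds w \<Longrightarrow> length bs = n \<Longrightarrow> homog G n ds (masked bs w)"
  by (auto simp: homog_def nth_masked N_graded)

lemma muS_eq_masked: "length w = n \<Longrightarrow> muS mu N n S w = mu n (masked (mask_of n S) w)"
  unfolding muS_def masked_def
  by (rule arg_cong[where f="mu n"], rule nth_equalityI) (auto simp: nth_mask_of nth_upt simp del: upt_Suc)

lemma sum_card_muS_eq_sum_masks:
  assumes "length w = n" and phi_sum: "\<And>k (f :: nat set \<Rightarrow> 'v) A. phi k (sum f A) = (\<Sum>a\<in>A. phi k (f a))"
  shows "(\<Sum>k\<in>{1..n}. phi k (\<Sum>S\<in>{S. S \<subseteq> {1..n} \<and> card S = k}. muS mu N n S w))
       = (\<Sum>bs\<in>masks n. if True \<in> set bs then phi (count_list bs True) (mu n (masked bs w)) else 0)"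
proof -
  have "(\<Sum>k\<in>{1..n}. phi k (\<Sum>S\<in>{S. S \<subseteq> {1..n} \<and> card S = k}. muS mu N n S w)) =
      (\<Sum>S\<in>{S. S \<subseteq> {1..n} \<and> S \<noteq> {}}. phi (card S) (muS mu N n S w))"
    by (simp only: phi_sum sum_subsets_by_card)
  also have "\<dots> = (\<Sum>bs\<in>masks n. if True \<in> set bs then phi (card (positions bs)) (muS mu N n (positions bs) w) else 0)"
    by (rule sum_nonempty_subsets_eq_sum_masks)
  also have "\<dots> = (\<Sum>bs\<in>masks n. if True \<in> set bs then phi (count_list bs True) (mu n (masked bs w)) else 0)"
    by (intro sum.cong refl) (auto simp: masks_def card_positions muS_eq_masked[OF assms(1)] mask_of_positions)
  finally show ?thesis .
qed

lemma nijenhuis_sum_masks: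
  assumes "n \<ge> 1" and "length w = n" and "set w \<subseteq> homogeneous"
  shows "(\<Sum>bs\<in>masks n. (negN ^^ count_list bs True) (mu n (masked bs w))) = 0"
proof -
  obtain ds where "homog G n ds w" using obtain_homog assms(2,3) by metis
  then have "mu n (map N w) = (\<Sum>k\<in>{1..n}. scale ((-1) ^ (k - 1))
           ((N ^^ k) (\<Sum>S\<in>{S. S \<subseteq> {1..n} \<and> card S = k}. muS mu N n S w)))"
    by (rule nijenhuis[OF assms(1)])
  also have "\<dots> = (\<Sum>k\<in>{1..n}. - (negN ^^ k) (\<Sum>S\<in>{S. S \<subseteq> {1..n} \<and> card S = k}. muS mu N n S w))"
    by (intro sum.cong refl scale_N_pow_eq_negN_pow) simp
  also have "\<dots> = - (\<Sum>bs\<in>masks n. if True \<in> set bs then (negN ^^ count_list bs True) (mu n (masked bs w)) else 0)"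
    using sum_card_muS_eq_sum_masks[OF assms(2), of "\<lambda>k. negN ^^ k"] by (simp add: negN_pow_sum sum_negf)
  finally show ?thesis
    using assms(2) by (subst sum_masks_remove_zero) (simp add: masked_replicate_False count_list_0_iff)
qed

definition deformed :: "nat \<Rightarrow> 'v list \<Rightarrow> 'v" where
  "deformed n w = (\<Sum>bs\<in>masks n. if True \<in> set bs then (negN ^^ (count_list bs True - 1)) (mu n (masked bs w)) else 0)"

lemma alternating_sum_eq_deformed:
  "length w = n \<Longrightarrow> (\<Sum>k\<in>{1..n}. scale ((-1) ^ (k - 1))
     ((N ^^ (k - 1)) (\<Sum>S\<in>{S. S \<subseteq> {1..n} \<and> card S = k}. muS mu N n S w))) = deformed n w"
  unfolding deformed_def negN_pow_eq[symmetric]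
  by (rule sum_card_muS_eq_sum_masks[where phi="\<lambda>k. negN ^^ (k - 1)"]) (simp_all add: negN_pow_sum)

lemma deformed_1: "length w = 1 \<Longrightarrow> deformed 1 w = mu 1 w"
  by (auto simp: deformed_def masks_0 sum_masks_Cons length_Suc_conv)

lemma mu_N_eq_deformed: "length w = n \<Longrightarrow> mu_N scale mu N n w = deformed n w"
  using deformed_1[of w] alternating_sum_eq_deformed[of w n] by (simp add: mu_N_def)

lemma N_negN_pow_pred:
  "True \<in> set bs \<Longrightarrow> N ((negN ^^ (count_list bs True - 1)) x) = - (negN ^^ count_list bs True) x"
  by (cases "count_list bs True") (simp_all add: count_list_0_iff negN_def)

lemma N_deformed:
  assumes "n \<ge> 1" and "length w = n" and "set w \<subseteq> homogeneous"
  shows "N (deformed n w) = mu n (map N w)"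
proof -
  have "N (deformed n w) = - (\<Sum>bs\<in>masks n. if True \<in> set bs then (negN ^^ count_list bs True) (mu n (masked bs w)) else 0)"
    unfolding deformed_def N.sum sum_negf[symmetric]
    by (intro sum.cong refl) (simp only: if_distrib[of N] if_distrib[of uminus] N.zero minus_zero N_negN_pow_pred cong: if_cong)
  also have "\<dots> = mu n (map N w)"
    using nijenhuis_sum_masks[OF assms] assms(2)
    by (subst (asm) sum_masks_remove_zero) (simp add: masked_replicate_False count_list_0_iff add_eq_0_iff)
  finally show ?thesis .
qed

definition flanked :: "'v list \<Rightarrow> 'v list \<Rightarrow> 'v \<Rightarrow> 'v" where
  "flanked pre post y = (\<Sum>b1\<in>masks (length pre). \<Sum>b2\<in>masks (length post).
     (negN ^^ (count_list b1 True + count_list b2 True))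
       (mu (length pre + 1 + length post) (masked b1 pre @ y # masked b2 post)))"

lemma flanked_add: "flanked pre post (x + y) = flanked pre post x + flanked pre post y"
proof -
  let ?m = "length pre + 1 + length post"
  have "mu ?m (masked b1 pre @ (x + y) # masked b2 post) =
      mu ?m (masked b1 pre @ x # masked b2 post) + mu ?m (masked b1 pre @ y # masked b2 post)"
    if "b1 \<in> masks (length pre)" "b2 \<in> masks (length post)" for b1 b2
    using that by (intro multilinear_slot_add[OF mu_multilinear]) (simp_all add: masks_def)
  then show ?thesis
    unfolding flanked_def sum.distrib[symmetric] by (intro sum.cong refl) (simp add: negN_pow_add)
qed

lemma flanked_zero: "flanked pre post 0 = 0"
  using flanked_add[of pre post 0 0] by simp

lemma flanked_sum: "flanked pre post (sum f A) = (\<Sum>a\<in>A. flanked pre post (f a))"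
  using sum_comp_morphism[of "flanked pre post" f A] flanked_add flanked_zero by simp

lemma flanked_uminus: "flanked pre post (- x) = - flanked pre post x"
  using flanked_add[of pre post "- x" x] flanked_zero by (simp add: eq_neg_iff_add_eq_0)

lemma flanked_N_commute:
  assumes "y \<in> homogeneous" and "set pre \<subseteq> homogeneous" and "set post \<subseteq> homogeneous"
  shows "flanked pre post (N y) = N (flanked pre post y)"
proof -
  let ?p = "length pre" and ?q = "length post"
  let ?m = "?p + 1 + ?q"
  define F where "F bs = (negN ^^ count_list bs True) (mu ?m (masked bs (pre @ y # post)))" for bs
  define t where "t b1 b2 z = (negN ^^ (count_list b1 True + count_list b2 True))
       (mu ?m (masked b1 pre @ z # masked b2 post))" for b1 b2 z
  \<comment> \<open>Split the Nijenhuis identity for \<open>pre @ y # post\<close> by the mask bit of \<open>y\<close>.\<close>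
  have "0 = (\<Sum>bs\<in>masks (?p + Suc ?q). F bs)"
    unfolding F_def using nijenhuis_sum_masks[of ?m "pre @ y # post"] assms by simp
  also have "\<dots> = (\<Sum>b1\<in>masks ?p. \<Sum>b2\<in>masks ?q. t b1 b2 (N y) - N (t b1 b2 y))"
    unfolding sum_masks_middle
    by (intro sum.cong refl) (simp add: F_def t_def masks_def negN_def)
  also have "\<dots> = flanked pre post (N y) - N (flanked pre post y)"
    unfolding flanked_def t_def N.sum sum_subtractf ..
  finally show ?thesis by simp
qed

lemma flanked_negN_pow_commute:
  assumes "y \<in> homogeneous" and "set pre \<subseteq> homogeneous" and "set post \<subseteq> homogeneous"
  shows "flanked pre post ((negN ^^ j) y) = (negN ^^ j) (flanked pre post y)"
proof (induct j)
  case (Suc j)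
  have "flanked pre post ((negN ^^ Suc j) y) = - flanked pre post (N ((negN ^^ j) y))"
    by (simp only: negN_pow_Suc flanked_uminus)
  also have "\<dots> = - N (flanked pre post ((negN ^^ j) y))"
    using flanked_N_commute[OF negN_pow_homogeneous[OF assms(1)] assms(2,3)] by simp
  also have "\<dots> = (negN ^^ Suc j) (flanked pre post y)"
    by (simp only: Suc.hyps negN_pow_Suc)
  finally show ?case .
qed simp

lemma deformed_split_middle:
  "deformed (length pre + 1 + length post) (pre @ x # post) = flanked pre post x +
     (\<Sum>b1\<in>masks (length pre). \<Sum>b2\<in>masks (length post). if True \<in> set (b1 @ b2)
        then (negN ^^ (count_list (b1 @ b2) True - 1))
          (mu (length pre + 1 + length post) (masked b1 pre @ N x # masked b2 post))
        else 0)"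
proof -
  have m: "length pre + 1 + length post = length pre + Suc (length post)" by simp
  show ?thesis
    unfolding deformed_def flanked_def m sum_masks_middle sum.distrib[symmetric]
    by (intro sum.cong refl) (simp add: masks_def)
qed

lemma flanked_deformed:
  assumes "length mid = n" and "n \<ge> 1" and "set (pre @ mid @ post) \<subseteq> homogeneous"
  shows "flanked pre post (deformed n mid) =
    (\<Sum>b1\<in>masks (length pre). \<Sum>b2\<in>masks (length post). \<Sum>u\<in>masks n.
       if True \<in> set u then (negN ^^ (count_list (b1 @ u @ b2) True - 1))
         (mu (length pre + 1 + length post) (masked b1 pre @ mu n (masked u mid) # masked b2 post))
       else 0)"
proof -
  let ?p = "length pre" and ?q = "length post"
  let ?m = "?p + 1 + ?q"
  have hom: "set pre \<subseteq> homogeneous" "set post \<subseteq> homogeneous" using assms(3) by auto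
  have mu_hom: "mu n (masked u mid) \<in> homogeneous" if "u \<in> masks n" for u
    using that assms by (intro mu_homogeneous masked_homogeneous) (auto simp: masks_def)
  have exp: "count_list u True - 1 + (count_list b1 True + count_list b2 True) = count_list (b1 @ u @ b2) True - 1"
    if "True \<in> set u" for u b1 b2 :: "bool list"
    using that by (cases "count_list u True") (simp_all add: count_list_0_iff)
  have "flanked pre post (deformed n mid) = (\<Sum>u\<in>masks n. if True \<in> set u
      then (negN ^^ (count_list u True - 1)) (flanked pre post (mu n (masked u mid))) else 0)"
    unfolding deformed_def flanked_sum
    by (intro sum.cong refl) (simp add: flanked_zero flanked_negN_pow_commute mu_hom hom)
  also have "\<dots> = (\<Sum>u\<in>masks n. \<Sum>b1\<in>masks ?p. \<Sum>b2\<in>masks ?q. if True \<in> set u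
      then (negN ^^ (count_list (b1 @ u @ b2) True - 1)) (mu ?m (masked b1 pre @ mu n (masked u mid) # masked b2 post))
      else 0)"
    unfolding flanked_def negN_pow_sum
    by (intro sum.cong refl) (auto simp: negN_pow_negN_pow exp simp del: One_nat_def intro!: sum.cong)
  finally show ?thesis
    by (simp only: sum.swap[of _ "masks n"])
qed

lemma deformed_nested:
  assumes "length mid = n" and "n \<ge> 1" and "set (pre @ mid @ post) \<subseteq> homogeneous"
  shows "deformed (length pre + 1 + length post) (pre @ deformed n mid # post) =
    (\<Sum>b1\<in>masks (length pre). \<Sum>u\<in>masks n. \<Sum>b2\<in>masks (length post).
       if True \<in> set (b1 @ u @ b2) then (negN ^^ (count_list (b1 @ u @ b2) True - 1))
         (mu (length pre + 1 + length post) (masked b1 pre @ mu n (masked u mid) # masked b2 post))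
       else 0)"
proof -
  let ?p = "length pre" and ?q = "length post"
  let ?m = "?p + 1 + ?q"
  define D where "D b1 u b2 = (if True \<in> set (b1 @ u @ b2) then (negN ^^ (count_list (b1 @ u @ b2) True - 1))
      (mu ?m (masked b1 pre @ mu n (masked u mid) # masked b2 post)) else 0)" for b1 u b2
  have hom_mid: "set mid \<subseteq> homogeneous" using assms(3) by simp
  \<comment> \<open>Split at the middle slot: keeping it yields the inner masks containing a True
      (\<open>flanked_deformed\<close>), applying \<open>N\<close> to it yields the all-False inner mask (\<open>N_deformed\<close>).\<close>
  have inner: "flanked pre post (deformed n mid) =
      (\<Sum>b1\<in>masks ?p. \<Sum>b2\<in>masks ?q. \<Sum>u\<in>masks n. if True \<in> set u then D b1 u b2 else 0)"
    unfolding flanked_deformed[OF assms] D_def by (intro sum.cong refl) simp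
  have outer: "(\<Sum>b1\<in>masks ?p. \<Sum>b2\<in>masks ?q. if True \<in> set (b1 @ b2)
      then (negN ^^ (count_list (b1 @ b2) True - 1)) (mu ?m (masked b1 pre @ N (deformed n mid) # masked b2 post))
      else 0) = (\<Sum>b1\<in>masks ?p. \<Sum>b2\<in>masks ?q. D b1 (replicate n False) b2)"
    unfolding N_deformed[OF assms(2,1) hom_mid] D_def
    by (intro sum.cong refl) (simp add: masked_replicate_False assms(1) count_list_append count_list_0_iff)
  have "deformed ?m (pre @ deformed n mid # post) = (\<Sum>b1\<in>masks ?p. \<Sum>b2\<in>masks ?q. \<Sum>u\<in>masks n. D b1 u b2)"
    unfolding deformed_split_middle inner outer sum_masks_remove_zero[of "\<lambda>u. D _ u _" n]
    by (simp add: sum.distrib)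
  then show ?thesis
    unfolding D_def by (simp only: sum.swap[of _ "masks ?q"])
qed

lemma deformed_plug:
  assumes "1 \<le> i" "i \<le> m" "m \<le> k" "length as = k" "set as \<subseteq> homogeneous"
  shows "deformed m (plug i (k + 1 - m) (deformed (k + 1 - m)) as) =
    (\<Sum>bs\<in>masks k. if True \<in> set bs then (negN ^^ (count_list bs True - 1))
       (mu m (plug i (k + 1 - m) (mu (k + 1 - m)) (masked bs as))) else 0)"
proof -
  define n where "n = k + 1 - m"
  obtain pre mid post where as: "as = pre @ mid @ post"
    and lens: "length pre = i - 1" "length mid = n" "length post = m - i"
    using obtain_plug_split[OF assms(1-4)] unfolding n_def by metis
  have m: "m = length pre + 1 + length post" and k: "k = length pre + (n + length post)"
    using assms(1-4) lens as by auto
  have "deformed m (plug i n (deformed n) as) =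
    (\<Sum>b1\<in>masks (length pre). \<Sum>u\<in>masks n. \<Sum>b2\<in>masks (length post).
       if True \<in> set (b1 @ u @ b2) then (negN ^^ (count_list (b1 @ u @ b2) True - 1))
         (mu m (masked b1 pre @ mu n (masked u mid) # masked b2 post)) else 0)"
    unfolding as plug_append[OF lens(1,2)] m
    by (rule deformed_nested[OF lens(2)]) (use assms(2,3,5) as in \<open>auto simp: n_def\<close>)
  also have "\<dots> = (\<Sum>bs\<in>masks k. if True \<in> set bs then (negN ^^ (count_list bs True - 1))
       (mu m (plug i n (mu n) (masked bs as))) else 0)"
    unfolding k sum_masks_append
    by (intro sum.cong refl) (simp add: as lens masks_def plug_append)
  finally show ?thesis unfolding n_def .
qed

lemma stasheff_sum_deformed:
  assumes "length as = k" and "set as \<subseteq> homogeneous"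
  shows "stasheff_sum scale deformed k ds as = (\<Sum>bs\<in>masks k. if True \<in> set bs
    then (negN ^^ (count_list bs True - 1)) (stasheff_sum scale mu k ds (masked bs as)) else 0)"
proof -
  define sg :: "nat \<Rightarrow> nat \<Rightarrow> 'k" where "sg m i = sgn1 (int i * (int (k + 1 - m) + 1) + int (k + 1 - m) * sum_list (take (i - 1) ds))" for m i
  define P where "P bs m i = mu m (plug i (k + 1 - m) (mu (k + 1 - m)) (masked bs as))" for bs m i
  have "stasheff_sum scale deformed k ds as = (\<Sum>m\<in>{1..k}. \<Sum>i\<in>{1..m}. scale (sg m i)
      (\<Sum>bs\<in>masks k. if True \<in> set bs then (negN ^^ (count_list bs True - 1)) (P bs m i) else 0))"
    unfolding stasheff_sum_def sg_def P_def
    by (intro sum.cong refl arg_cong[where f="scale _"] deformed_plug) (use assms in auto)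
  also have "\<dots> = (\<Sum>bs\<in>masks k. if True \<in> set bs then (negN ^^ (count_list bs True - 1))
      (\<Sum>m\<in>{1..k}. \<Sum>i\<in>{1..m}. scale (sg m i) (P bs m i)) else 0)"
    by (simp add: scale_sum_right if_distrib[of "scale _"] sum.swap[of _ "masks k"] negN_pow_sum negN_pow_scale
        cong: if_cong) (intro sum.cong refl, auto)
  finally show ?thesis unfolding stasheff_sum_def sg_def P_def .
qed

lemma eta_N_single: "1 \<le> r \<Longrightarrow> r \<le> n \<Longrightarrow> length w = n \<Longrightarrow> eta_N scale mu N n r w = mu n (masked (mask_of n {r}) w)"
  by (simp add: eta_N_def muS_eq_masked)

lemma ev_eta_N_single:
  "1 \<le> r \<Longrightarrow> r \<le> n \<Longrightarrow> length w = n \<Longrightarrow> ev n (eta_N scale mu N n) r w = mu n (masked (mask_of n {r}) w)"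
  by (simp add: ev_def idx_def eta_N_single)

lemma sum_singletons_muS: "(\<Sum>S\<in>{S. S \<subseteq> {1..n} \<and> card S = 1}. muS mu N n S w) = (\<Sum>j\<in>{1..n}. muS mu N n {j} w)"
proof -
  have "{S. S \<subseteq> {1..n} \<and> card S = 1} = (\<lambda>j. {j}) ` {1..n}" by (auto simp: card_1_singleton_iff)
  then show ?thesis by (simp add: sum.reindex)
qed

lemma ev_star_eta_N:
  assumes "n \<ge> 1" and "length w = n"
  shows "ev_star n (eta_N scale mu N n) w = deformed n w"
proof (cases "n = 1")
  case True
  then obtain x where "w = [x]" using assms(2) by (auto simp: length_Suc_conv)
  then show ?thesis using True eta_N_single[of 1 1 w] deformed_1[of w]
    by (simp add: ev_star_def idx_def mask_of_def)
next
  case False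
  define alt where "alt k = scale ((-1) ^ (k - 1))
    ((N ^^ (k - 1)) (\<Sum>S\<in>{S. S \<subseteq> {1..n} \<and> card S = k}. muS mu N n S w))" for k
  have "idx n = insert (n + 1) {1..n}" using False by (auto simp: idx_def)
  then have "ev_star n (eta_N scale mu N n) w = (\<Sum>j\<in>{1..n}. muS mu N n {j} w) + eta_N scale mu N n (n + 1) w"
    by (simp add: ev_star_def eta_N_def)
  also have "\<dots> = alt 1 + (\<Sum>k\<in>{2..n}. alt k)"
    using False assms(1) unfolding eta_N_def alt_def sum_singletons_muS by simp
  also have "\<dots> = (\<Sum>k\<in>{1..n}. alt k)"
    using assms(1) by (subst sum.atLeast_Suc_atMost[of 1 n]) (simp_all add: numeral_2_eq_2)
  also have "\<dots> = deformed n w"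
    unfolding alt_def by (rule alternating_sum_eq_deformed[OF assms(2)])
  finally show ?thesis .
qed

lemma pcomp_eta_N_single:
  assumes lens: "length pre = i - 1" "length mid = n" "length post = m - i"
    and i: "1 \<le> i" "i \<le> m" and n: "1 \<le> n" and hom: "set mid \<subseteq> homogeneous"
    and r: "1 \<le> r" "r \<le> m + n - 1"
  shows "pcomp scale m (eta_N scale mu N m) n (eta_N scale mu N n) i r ds (pre @ mid @ post) =
    scale (sgn1 (int n * sum_list (take (i - 1) ds)))
      (mu m (plug i n (mu n) (masked (mask_of (m + n - 1) {r}) (pre @ mid @ post))))"
proof -
  define p q where "p = i - 1" and "q = m - i"
  have m: "m = p + Suc q" and k: "m + n - 1 = p + (n + q)" and i_eq: "i = Suc p"
    using i n by (auto simp: p_def q_def)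
  have lens': "length pre = p" "length post = q" using lens by (simp_all add: p_def q_def)
  have N_X: "N (ev_star n (eta_N scale mu N n) mid) = mu n (map N mid)"
    using ev_star_eta_N[OF n lens(2)] N_deformed[OF n lens(2) hom] by simp
  have rhs: "plug i n (mu n) (masked (mask_of (m + n - 1) {r}) (pre @ mid @ post)) =
      masked (mask_of p {r}) pre @ mu n (masked (mask_of n {r - p}) mid) # masked (mask_of q {r - p - n}) post"
    unfolding k mask_of_singleton_add using lens lens' by (simp add: plug_append p_def)
  have em: "mask_of m {j} = mask_of p {j} @ mask_of (Suc q) {j - p}" for j
    unfolding m by (rule mask_of_singleton_add)
  have len_m: "length (pre @ x # post) = m" for x using lens' m by simp
  have p_less: "p < m" and m_eq: "Suc (p + q) = m" using m by simp_all
  \<comment> \<open>In every branch only the \<open>r\<close>-th input escapes \<open>N\<close>; in the outer branches the middle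
      slot holds \<open>N (deformed n mid) = mu n (map N mid)\<close>.\<close>
  consider (left) "r \<le> p" | (middle) "p < r" "r \<le> p + n" | (right) "p + n < r" by linarith
  then show ?thesis
  proof cases
    case left
    then show ?thesis unfolding pcomp_append[OF lens(1,2)] rhs
      using r lens(2) lens' N_X p_less m_eq
      by (simp add: i_eq len_m ev_eta_N_single em mask_of_singleton_Suc mask_of_singleton_outside masked_replicate_False)
  next
    case middle
    then show ?thesis unfolding pcomp_append[OF lens(1,2)] rhs
      using r lens(2) lens' n p_less m_eq
      by (simp add: i_eq len_m ev_eta_N_single em Suc_diff_Suc mask_of_singleton_Suc mask_of_singleton_outside masked_replicate_False)
  next
    case right
    then have "Suc r - (n + p) \<noteq> Suc 0" "r - (n + p) = r - (p + n)" by simp_all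
    with right show ?thesis unfolding pcomp_append[OF lens(1,2)] rhs
      using r lens(2) lens' N_X p_less m_eq
      by (simp add: i_eq len_m ev_eta_N_single em mask_of_singleton_Suc mask_of_singleton_outside masked_replicate_False)
  qed
qed

lemma sum_pcomp_eta_N:
  assumes lens: "length pre = i - 1" "length mid = n" "length post = m - i"
    and i: "1 \<le> i" "i \<le> m" and n: "1 \<le> n"
  shows "(\<Sum>r\<in>{1..m + n}. pcomp scale m (eta_N scale mu N m) n (eta_N scale mu N n) i r ds (pre @ mid @ post)) =
    scale (sgn1 (int n * sum_list (take (i - 1) ds))) (deformed m (pre @ deformed n mid # post))"
proof -
  have "multilinear scale m (muS mu N m {i})"
    using i by (intro multilinear_muS mu_multilinear N.linear_axioms) simp
  then have "muS mu N m {i} (pre @ (x + y) # post) =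
      muS mu N m {i} (pre @ x # post) + muS mu N m {i} (pre @ y # post)" for x y
    using i lens by (intro multilinear_slot_add) simp_all
  then have "eta_N scale mu N m i (pre @ (x + y) # post) =
      eta_N scale mu N m i (pre @ x # post) + eta_N scale mu N m i (pre @ y # post)" for x y
    using i by (simp add: eta_N_def)
  then show ?thesis
    using sum_pcomp[OF lens i n] ev_star_eta_N[OF n lens(2)] ev_star_eta_N[of m "pre @ deformed n mid # post"] i lens
    by simp
qed

lemma ns_sum_eta_N_single:
  assumes r: "1 \<le> r" "r \<le> k" and len: "length as = k" and hom: "set as \<subseteq> homogeneous"
  shows "ns_sum scale (eta_N scale mu N) k r ds as = stasheff_sum scale mu k ds (masked (mask_of k {r}) as)"
  unfolding ns_sum_def stasheff_sum_def
proof (intro sum.cong refl)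
  fix m i assume m: "m \<in> {1..k}" and i: "i \<in> {1..m}"
  obtain pre mid post where as: "as = pre @ mid @ post"
    and lens: "length pre = i - 1" "length mid = k + 1 - m" "length post = m - i"
    using obtain_plug_split[of i m k as] m i len by auto
  have "m + (k + 1 - m) - 1 = k" using m by simp
  then show "scale (sgn1 (int i * (int (k + 1 - m) + 1)))
      (pcomp scale m (eta_N scale mu N m) (k + 1 - m) (eta_N scale mu N (k + 1 - m)) i r ds as) =
    scale (sgn1 (int i * (int (k + 1 - m) + 1) + int (k + 1 - m) * sum_list (take (i - 1) ds)))
      (mu m (plug i (k + 1 - m) (mu (k + 1 - m)) (masked (mask_of k {r}) as)))"
    using pcomp_eta_N_single[OF lens, of r ds] m i r hom as
    by (simp add: sgn1_add)
qed

lemma sum_ns_sum_eta_N: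
  assumes len: "length as = k" and hom: "set as \<subseteq> homogeneous"
  shows "(\<Sum>r\<in>{1..k + 1}. ns_sum scale (eta_N scale mu N) k r ds as) = stasheff_sum scale deformed k ds as"
proof -
  have "(\<Sum>r\<in>{1..k + 1}. ns_sum scale (eta_N scale mu N) k r ds as) =
    (\<Sum>m\<in>{1..k}. \<Sum>i\<in>{1..m}. scale (sgn1 (int i * (int (k + 1 - m) + 1)))
      (\<Sum>r\<in>{1..k + 1}. pcomp scale m (eta_N scale mu N m) (k + 1 - m) (eta_N scale mu N (k + 1 - m)) i r ds as))"
    unfolding ns_sum_def scale_sum_right
    by (subst sum.swap) (rule sum.cong[OF refl], rule sum.swap)
  also have "\<dots> = stasheff_sum scale deformed k ds as"
    unfolding stasheff_sum_def
  proof (intro sum.cong refl)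
    fix m i assume m: "m \<in> {1..k}" and i: "i \<in> {1..m}"
    obtain pre mid post where as: "as = pre @ mid @ post"
      and lens: "length pre = i - 1" "length mid = k + 1 - m" "length post = m - i"
      using obtain_plug_split[of i m k as] m i len by auto
    have "k + 1 = m + (k + 1 - m)" using m by simp
    then show "scale (sgn1 (int i * (int (k + 1 - m) + 1)))
      (\<Sum>r\<in>{1..k + 1}. pcomp scale m (eta_N scale mu N m) (k + 1 - m) (eta_N scale mu N (k + 1 - m)) i r ds as) =
      scale (sgn1 (int i * (int (k + 1 - m) + 1) + int (k + 1 - m) * sum_list (take (i - 1) ds)))
       (deformed m (plug i (k + 1 - m) (deformed (k + 1 - m)) as))"
      using sum_pcomp_eta_N[OF lens, of ds] m i as
      by (simp add: sgn1_add plug_append lens)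
  qed
  finally show ?thesis .
qed

lemma alternating_sum_multilinear:
  assumes "n \<ge> 1" and "finite K"
  defines "f \<equiv> \<lambda>as. \<Sum>k\<in>K. scale ((-1) ^ (k - 1))
      ((N ^^ (k - 1)) (\<Sum>S\<in>{S. S \<subseteq> {1..n} \<and> card S = k}. muS mu N n S as))"
  shows "multilinear scale n f \<and> has_degree G n (int n - 2) f"
proof -
  have fin: "finite {S. S \<subseteq> {1..n} \<and> card S = k}" for k
    by (rule finite_subset[of _ "Pow {1..n}"]) auto
  have f: "f = (\<lambda>as. \<Sum>k\<in>K. (negN ^^ (k - 1)) (\<Sum>S\<in>{S. S \<subseteq> {1..n} \<and> card S = k}. muS mu N n S as))"
    by (simp add: f_def negN_pow_eq)
  show ?thesis unfolding f
    using assms(1,2) fin mu_multilinear mu_degree N.linear_axioms N_graded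
    by (intro conjI multilinear_sum multilinear_compose_linear[OF linear_negN_pow] multilinear_muS
        has_degree_sum subspace_G has_degree_compose[OF negN_pow_graded] has_degree_muS) auto
qed

lemma eta_N_multilinear:
  assumes "n \<ge> 1" and "r \<in> idx n"
  shows "multilinear scale n (eta_N scale mu N n r) \<and> has_degree G n (int n - 2) (eta_N scale mu N n r)"
proof (cases "r \<le> n")
  case True
  then have "eta_N scale mu N n r = muS mu N n {r}"
    using assms(2) by (auto simp: eta_N_def idx_def split: if_splits)
  then show ?thesis
    using assms(1) by (simp add: multilinear_muS mu_multilinear N.linear_axioms has_degree_muS mu_degree N_graded)
next
  case False
  then have "eta_N scale mu N n r = (\<lambda>as. \<Sum>k\<in>{2..n}. scale ((-1) ^ (k - 1))
      ((N ^^ (k - 1)) (\<Sum>S\<in>{S. S \<subseteq> {1..n} \<and> card S = k}. muS mu N n S as)))"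
    using assms by (auto simp: eta_N_def idx_def split: if_splits)
  then show ?thesis using alternating_sum_multilinear[OF assms(1)] by simp
qed

lemma mu_N_multilinear:
  assumes "n \<ge> 1"
  shows "multilinear scale n (mu_N scale mu N n) \<and> has_degree G n (int n - 2) (mu_N scale mu N n)"
proof (cases "n = 1")
  case True
  then have "mu_N scale mu N n = mu n" by (simp add: mu_N_def fun_eq_iff)
  then show ?thesis using mu_multilinear[OF assms] mu_degree[OF assms] by simp
next
  case False
  then have "mu_N scale mu N n = (\<lambda>as. \<Sum>k\<in>{1..n}. scale ((-1) ^ (k - 1))
      ((N ^^ (k - 1)) (\<Sum>S\<in>{S. S \<subseteq> {1..n} \<and> card S = k}. muS mu N n S as)))"
    by (simp add: mu_N_def fun_eq_iff)
  then show ?thesis using alternating_sum_multilinear[OF assms(1)] by simp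
qed

end

locale nijenhuis_A_infinity = graded_nijenhuis +
  assumes stasheff: "k \<ge> 1 \<Longrightarrow> homog G k ds as \<Longrightarrow> stasheff_sum scale mu k ds as = 0"
begin

lemma stasheff_deformed:
  assumes "k \<ge> 1" and "homog G k ds as"
  shows "stasheff_sum scale deformed k ds as = 0"
proof -
  have "length as = k" using assms(2) by (simp add: homog_def)
  then show ?thesis
    unfolding stasheff_sum_deformed[OF \<open>length as = k\<close> homog_homogeneous[OF assms(2)]]
    by (intro sum.neutral) (simp add: masks_def stasheff[OF assms(1) homog_masked[OF assms(2)]])
qed

lemma ns_sum_eta_N_zero:
  assumes k: "k \<ge> 1" and r: "r \<in> idx k" and as: "homog G k ds as"
  shows "ns_sum scale (eta_N scale mu N) k r ds as = 0"
proof -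
  have len: "length as = k" using as by (simp add: homog_def)
  have hom: "set as \<subseteq> homogeneous" using as by (rule homog_homogeneous)
  have single: "ns_sum scale (eta_N scale mu N) k r' ds as = 0" if "1 \<le> r'" "r' \<le> k" for r'
    using ns_sum_eta_N_single[OF that len hom] stasheff[OF k homog_masked[OF as]] by simp
  show ?thesis
  proof (cases "r \<le> k")
    case True
    then show ?thesis using r single by (auto simp: idx_def split: if_splits)
  next
    case False
    then have "r = k + 1" using r by (auto simp: idx_def split: if_splits)
    moreover have "(\<Sum>r\<in>{1..k + 1}. ns_sum scale (eta_N scale mu N) k r ds as) = 0"
      using sum_ns_sum_eta_N[OF len hom] stasheff_deformed[OF k as] by simp
    ultimately show ?thesis using single by simp
  qed
qed

theorem NS_infinity_eta_N: "NS_infinity scale G (eta_N scale mu N)"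
  unfolding NS_infinity_iff using graded eta_N_multilinear ns_sum_eta_N_zero by blast

theorem A_infinity_mu_N: "A_infinity scale G (mu_N scale mu N)"
proof -
  have "stasheff_sum scale (mu_N scale mu N) k ds as = 0" if k: "k \<ge> 1" and as: "homog G k ds as" for k ds as
  proof -
    have "stasheff_sum scale (mu_N scale mu N) k ds as = stasheff_sum scale deformed k ds as"
      using as by (intro stasheff_sum_cong mu_N_eq_deformed) (simp_all add: homog_def)
    then show ?thesis using stasheff_deformed[OF k as] by simp
  qed
  then show ?thesis unfolding A_infinity_iff using graded mu_N_multilinear by blast
qed

end

lemma nijenhuis_A_infinityI:
  assumes "A_infinity scale G mu" and "strict_homotopy_Nijenhuis scale G mu N"
  shows "nijenhuis_A_infinity scale N G mu"
  using assms
  unfolding nijenhuis_A_infinity_def nijenhuis_A_infinity_axioms_def graded_nijenhuis_def graded_nijenhuis_axioms_def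
    A_infinity_iff strict_homotopy_Nijenhuis_def graded_vs_def
  by (auto simp: image_subset_iff)

theorem theorem6p14:
  fixes scale :: "'k::field_char_0 \<Rightarrow> 'v::ab_group_add \<Rightarrow> 'v"
    and G :: "int \<Rightarrow> 'v set"
    and mu :: "nat \<Rightarrow> 'v list \<Rightarrow> 'v"
    and N :: "'v \<Rightarrow> 'v"
  assumes "A_infinity scale G mu"
    and "strict_homotopy_Nijenhuis scale G mu N"
  shows "NS_infinity scale G (eta_N scale mu N) \<and> A_infinity scale G (mu_N scale mu N)"
proof -
  interpret nijenhuis_A_infinity scale N G mu
    using assms by (rule nijenhuis_A_infinityI)
  show ?thesis using NS_infinity_eta_N A_infinity_mu_N ..
qed

end
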